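(* The full subcategory $\mathbf{Top}_{d^{\ast}}$ of $\mathbf{Top}_0$ consisting of all $d^{\ast}$-spaces and continuous maps is not a reflective subcategory of $\mathbf{Top}_0$.
   Context: $\mathbf{Top}_0$ is the category of $T_0$-spaces and continuous maps. A full subcategory is reflective if its inclusion functor has a left adjoint. The specialization order of a space $X$ is given by $x\le y$ iff $x\in cl(\{y\})$; ${\uparrow}$ is taken with respect to it. A $T_0$-space $X$ is a $d^{\ast}$-space if for every directed $D\subseteq X$ (in the specialization order), every $x\in X$ and every nonempty open $U\subseteq X$, $\bigcap_{d\in D}{\uparrow}d\cap{\uparrow}x\subseteq U$ implies ${\uparrow}d\cap{\uparrow}x\subseteq U$ for some $d\in D$. *)

theory Defs
  imports "HOL-Analysis.Analysis"
begin

definition spec_le :: "'a topology \<Rightarrow> 'a \<Rightarrow> 'a \<Rightarrow> bool" where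
  "spec_le X x y \<longleftrightarrow> x \<in> topspace X \<and> y \<in> topspace X \<and> x \<in> X closure_of {y}"

definition spec_up :: "'a topology \<Rightarrow> 'a \<Rightarrow> 'a set" where
  "spec_up X a = {y \<in> topspace X. spec_le X a y}"

definition spec_directed :: "'a topology \<Rightarrow> 'a set \<Rightarrow> bool" where
  "spec_directed X D \<longleftrightarrow> D \<subseteq> topspace X \<and> D \<noteq> {} \<and>
     (\<forall>a\<in>D. \<forall>b\<in>D. \<exists>c\<in>D. spec_le X a c \<and> spec_le X b c)"

definition dstar_space :: "'a topology \<Rightarrow> bool" where
  "dstar_space X \<longleftrightarrow> t0_space X \<and>
     (\<forall>D x U. spec_directed X D \<and> x \<in> topspace X \<and> openin X U \<and> U \<noteq> {} \<and>
        (\<Inter>d\<in>D. spec_up X d) \<inter> spec_up X x \<subseteq> U \<longrightarrow>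
        (\<exists>d\<in>D. spec_up X d \<inter> spec_up X x \<subseteq> U))"

text \<open>(R, eta) is a reflection of X into the d*-spaces, where the universal property is
  tested against all d*-spaces Y whose points have type 'c.\<close>
definition dstar_reflection :: "'c itself \<Rightarrow> 'a topology \<Rightarrow> 'b topology \<Rightarrow> ('a \<Rightarrow> 'b) \<Rightarrow> bool" where
  "dstar_reflection _ X R \<eta> \<longleftrightarrow> dstar_space R \<and> continuous_map X R \<eta> \<and>
     (\<forall>(Y::'c topology) f. dstar_space Y \<and> continuous_map X Y f \<longrightarrow>
        (\<exists>g. continuous_map R Y g \<and> (\<forall>x\<in>topspace X. g (\<eta> x) = f x) \<and>
           (\<forall>g'. continuous_map R Y g' \<and> (\<forall>x\<in>topspace X. g' (\<eta> x) = f x) \<longrightarrow>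
              (\<forall>r\<in>topspace R. g' r = g r))))"

end

(*
  Take for X the chain 0 <= 1 <= 2 <= ... together with an isolated point p, topologised
  by its upper sets. If eta : X -> R were a d*-reflection, the chain eta 0 <= eta 1 <= ...
  would have no upper bound in R: the level map from X onto the chain omega (itself a
  d*-space) extends over R and would carry an upper bound to one of omega. In a d*-space
  the upsets of such an unbounded chain have empty intersection, and applying the d*-property
  to this empty set shows that the chain meets every nonempty open set. But the indicator
  of p into a discrete space also extends over R, and the preimage of the value at p is a
  nonempty open set avoiding the chain.
*)
theory Submission
  imports Defs
begin

lemma spec_le_refl: "x \<in> topspace X \<Longrightarrow> spec_le X x x"
  unfolding spec_le_def using closure_of_subset[of "{x}" X] by auto

lemma spec_le_continuous_map:
  assumes "continuous_map X Y f" "spec_le X x y"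
  shows "spec_le Y (f x) (f y)"
proof -
  have "f x \<in> f ` (X closure_of {y})"
    using assms(2) unfolding spec_le_def by blast
  also have "\<dots> \<subseteq> Y closure_of {f y}"
    using continuous_map_image_closure_subset[OF assms(1), of "{y}"] by simp
  finally show ?thesis
    using assms continuous_map_image_subset_topspace[OF assms(1)] unfolding spec_le_def by blast
qed

lemma openin_spec_le_upclosed:
  assumes "openin X U" "x \<in> U" "spec_le X x y"
  shows "y \<in> U"
  using assms unfolding spec_le_def in_closure_of by blast

lemma dstar_space_discrete_topology: "dstar_space (discrete_topology S)"
  unfolding dstar_space_def
proof (intro conjI t0_space_discrete_topology allI impI)
  fix D x U
  assume asm: "spec_directed (discrete_topology S) D \<and> x \<in> topspace (discrete_topology S) \<and>
     openin (discrete_topology S) U \<and> U \<noteq> {} \<and>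
     (\<Inter>d\<in>D. spec_up (discrete_topology S) d) \<inter> spec_up (discrete_topology S) x \<subseteq> U"
  then obtain d where "d \<in> D"
    unfolding spec_directed_def by blast
  moreover have "D = {d}"
    using asm \<open>d \<in> D\<close> unfolding spec_directed_def spec_le_def discrete_topology_closure_of by auto
  ultimately show "\<exists>d\<in>D. spec_up (discrete_topology S) d \<inter> spec_up (discrete_topology S) x \<subseteq> U"
    using asm by auto
qed

definition upper_topology :: "'a set \<Rightarrow> ('a \<Rightarrow> 'a \<Rightarrow> bool) \<Rightarrow> 'a topology" where
  "upper_topology S le = topology (\<lambda>U. U \<subseteq> S \<and> (\<forall>x\<in>U. \<forall>y\<in>S. le x y \<longrightarrow> y \<in> U))"

lemma openin_upper_topology:
  "openin (upper_topology S le) U \<longleftrightarrow> U \<subseteq> S \<and> (\<forall>x\<in>U. \<forall>y\<in>S. le x y \<longrightarrow> y \<in> U)"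
proof -
  have "istopology (\<lambda>U. U \<subseteq> S \<and> (\<forall>x\<in>U. \<forall>y\<in>S. le x y \<longrightarrow> y \<in> U))"
    unfolding istopology_def by blast
  then show ?thesis
    unfolding upper_topology_def by (simp add: topology_inverse')
qed

lemma topspace_upper_topology [simp]: "topspace (upper_topology S le) = S"
  unfolding topspace_def openin_upper_topology by blast

lemma openin_upper_topology_upset:
  assumes "transp_on S le" "x \<in> S"
  shows "openin (upper_topology S le) {y \<in> S. le x y}"
  using assms unfolding openin_upper_topology transp_on_def by blast

lemma spec_le_upper_topology:
  assumes "reflp_on S le" "transp_on S le"
  shows "spec_le (upper_topology S le) x y \<longleftrightarrow> x \<in> S \<and> y \<in> S \<and> le x y"
proof
  assume xy: "spec_le (upper_topology S le) x y"
  then have "x \<in> S" "y \<in> S"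
    unfolding spec_le_def by auto
  moreover have "x \<in> {z \<in> S. le x z}"
    using assms(1) \<open>x \<in> S\<close> unfolding reflp_on_def by blast
  ultimately show "x \<in> S \<and> y \<in> S \<and> le x y"
    using openin_spec_le_upclosed[OF openin_upper_topology_upset[OF assms(2)] _ xy] by blast
next
  assume "x \<in> S \<and> y \<in> S \<and> le x y"
  then show "spec_le (upper_topology S le) x y"
    unfolding spec_le_def in_closure_of openin_upper_topology by auto
qed

lemma t0_space_upper_topology:
  assumes "reflp_on S le" "transp_on S le" "antisymp_on S le"
  shows "t0_space (upper_topology S le)"
  unfolding t0_space_def topspace_upper_topology
proof (intro ballI impI)
  fix x y assume "x \<in> S" "y \<in> S" "x \<noteq> y"
  have separates: "\<exists>U. openin (upper_topology S le) U \<and> a \<in> U \<and> b \<notin> U"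
    if "a \<in> S" "\<not> le a b" for a b
  proof (intro exI conjI)
    show "openin (upper_topology S le) {z \<in> S. le a z}"
      using openin_upper_topology_upset[OF assms(2) \<open>a \<in> S\<close>] .
    show "a \<in> {z \<in> S. le a z}" "b \<notin> {z \<in> S. le a z}"
      using assms(1) that unfolding reflp_on_def by auto
  qed
  consider "\<not> le x y" | "\<not> le y x"
    using assms(3) \<open>x \<in> S\<close> \<open>y \<in> S\<close> \<open>x \<noteq> y\<close> unfolding antisymp_on_def by blast
  then show "\<exists>U. openin (upper_topology S le) U \<and> (x \<notin> U \<longleftrightarrow> y \<in> U)"
    by cases (use separates[of x y] separates[of y x] \<open>x \<in> S\<close> \<open>y \<in> S\<close> in blast)+
qed

lemma continuous_map_upper_topology:
  assumes "f ` S \<subseteq> topspace Y" and "\<And>x y. x \<in> S \<Longrightarrow> y \<in> S \<Longrightarrow> le x y \<Longrightarrow> spec_le Y (f x) (f y)"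
  shows "continuous_map (upper_topology S le) Y f"
  unfolding continuous_map topspace_upper_topology openin_upper_topology
proof (intro conjI allI impI ballI)
  fix V x y
  assume "openin Y V" "x \<in> {x \<in> S. f x \<in> V}" "y \<in> S" "le x y"
  then have "f y \<in> V"
    using openin_spec_le_upclosed[of Y V "f x" "f y"] assms(2)[of x y] by simp
  then show "y \<in> {x \<in> S. f x \<in> V}"
    using \<open>y \<in> S\<close> by simp
qed (use assms(1) in auto)

lemma dstar_spaceD:
  assumes "dstar_space X" "spec_directed X D" "x \<in> topspace X" "openin X U" "U \<noteq> {}"
    and "(\<Inter>d\<in>D. spec_up X d) \<inter> spec_up X x \<subseteq> U"
  obtains d where "d \<in> D" "spec_up X d \<inter> spec_up X x \<subseteq> U"
  using assms unfolding dstar_space_def by meson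

lemma dstar_space_unbounded_chain_meets_open:
  fixes c :: "nat \<Rightarrow> 'a"
  assumes "dstar_space X"
    and chain: "\<And>n. c n \<in> topspace X" "\<And>m n. m \<le> n \<Longrightarrow> spec_le X (c m) (c n)"
    and unbounded: "\<And>r. \<not> (\<forall>n. spec_le X (c n) r)"
    and "openin X U" "U \<noteq> {}"
  obtains n where "c n \<in> U"
proof -
  have "spec_directed X (range c)"
    unfolding spec_directed_def
  proof (intro conjI ballI)
    fix a b assume "a \<in> range c" "b \<in> range c"
    then obtain i j where "a = c i" "b = c j" by blast
    then have "spec_le X a (c (max i j))" "spec_le X b (c (max i j))"
      using chain(2)[of i "max i j"] chain(2)[of j "max i j"] by simp_all
    then show "\<exists>d\<in>range c. spec_le X a d \<and> spec_le X b d"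
      by blast
  qed (use chain(1) in auto)
  moreover have "(\<Inter>d\<in>range c. spec_up X d) = {}"
    using unbounded unfolding spec_up_def by auto
  ultimately obtain d where "d \<in> range c" and d: "spec_up X d \<inter> spec_up X (c 0) \<subseteq> U"
    using dstar_spaceD[OF assms(1) _ chain(1) assms(5,6)] by blast
  then obtain n where "d = c n" by blast
  have "c n \<in> spec_up X (c n) \<inter> spec_up X (c 0)"
    unfolding spec_up_def using chain spec_le_refl by auto
  then show thesis
    using that d \<open>d = c n\<close> by blast
qed

definition chain_le :: "(nat \<Rightarrow> 'a) \<Rightarrow> 'a \<Rightarrow> 'a \<Rightarrow> bool" where
  "chain_le f x y \<longleftrightarrow> (\<exists>m n. x = f m \<and> y = f n \<and> m \<le> n)"

lemma chain_le_image_iff [simp]: "inj f \<Longrightarrow> chain_le f (f m) (f n) \<longleftrightarrow> m \<le> n"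
  unfolding chain_le_def by (auto dest: injD)

lemma reflp_on_chain_le: "reflp_on (range f) (chain_le f)"
  unfolding reflp_on_def chain_le_def by blast

lemma transp_chain_le: "inj f \<Longrightarrow> transp (chain_le f)"
  unfolding transp_on_def chain_le_def by (auto simp: inj_eq)

lemma antisymp_chain_le: "inj f \<Longrightarrow> antisymp (chain_le f)"
  unfolding antisymp_on_def chain_le_def by (auto simp: inj_eq)

definition omega_topology :: "(nat \<Rightarrow> 'a) \<Rightarrow> 'a topology" where
  "omega_topology f = upper_topology (range f) (chain_le f)"

lemma spec_le_omega_topology:
  assumes "inj f"
  shows "spec_le (omega_topology f) x y \<longleftrightarrow> chain_le f x y"
proof -
  have trans: "transp_on (range f) (chain_le f)"
    using transp_on_subset[OF transp_chain_le[OF assms] subset_UNIV] .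
  then show ?thesis
    unfolding omega_topology_def spec_le_upper_topology[OF reflp_on_chain_le trans]
    by (auto simp: chain_le_def)
qed

lemma spec_up_omega_topology: "inj f \<Longrightarrow> spec_up (omega_topology f) (f n) = f ` {n..}"
  unfolding spec_up_def spec_le_omega_topology by (auto simp: omega_topology_def chain_le_def inj_eq)

lemma omega_topology_unbounded: "inj f \<Longrightarrow> \<not> (\<forall>n. spec_le (omega_topology f) (f n) y)"
  unfolding spec_le_omega_topology chain_le_def by (metis Suc_n_not_le_n injD)

lemma dstar_space_omega_topology:
  assumes "inj f"
  shows "dstar_space (omega_topology f)"
  unfolding dstar_space_def
proof (intro conjI allI impI)
  have "transp_on (range f) (chain_le f)" "antisymp_on (range f) (chain_le f)"
    using transp_chain_le[OF assms] antisymp_chain_le[OF assms]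
    by (auto intro: transp_on_subset antisymp_on_subset)
  then show "t0_space (omega_topology f)"
    unfolding omega_topology_def by (intro t0_space_upper_topology reflp_on_chain_le)
next
  fix D x U
  assume "spec_directed (omega_topology f) D \<and> x \<in> topspace (omega_topology f) \<and>
    openin (omega_topology f) U \<and> U \<noteq> {} \<and>
    (\<Inter>d\<in>D. spec_up (omega_topology f) d) \<inter> spec_up (omega_topology f) x \<subseteq> U"
  then have D: "D \<subseteq> range f" "D \<noteq> {}" and U: "openin (omega_topology f) U" "U \<noteq> {}"
    and below: "(\<Inter>d\<in>D. spec_up (omega_topology f) d) \<inter> spec_up (omega_topology f) x \<subseteq> U"
    unfolding spec_directed_def omega_topology_def by auto
  define N where "N = f -` D"
  have D_eq: "D = f ` N"
    using D(1) unfolding N_def by auto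
  have up_mono: "spec_up (omega_topology f) (f n) \<subseteq> spec_up (omega_topology f) (f m)"
    if "m \<le> n" for m n
    using that by (auto simp: spec_up_omega_topology[OF assms])
  \<comment> \<open>A finite D has a largest element; an infinite one climbs into the upper set U.\<close>
  show "\<exists>d\<in>D. spec_up (omega_topology f) d \<inter> spec_up (omega_topology f) x \<subseteq> U"
  proof (cases "finite N")
    case True
    have "N \<noteq> {}"
      using D(2) D_eq by blast
    have "spec_up (omega_topology f) (f (Max N)) \<subseteq> (\<Inter>d\<in>D. spec_up (omega_topology f) d)"
    proof (rule INT_greatest)
      fix d assume "d \<in> D"
      then obtain n where "n \<in> N" "d = f n"
        unfolding D_eq by blast
      then show "spec_up (omega_topology f) (f (Max N)) \<subseteq> spec_up (omega_topology f) d"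
        using up_mono[OF Max_ge[OF True]] by simp
    qed
    moreover have "f (Max N) \<in> D"
      using Max_in[OF True \<open>N \<noteq> {}\<close>] unfolding D_eq by blast
    ultimately show ?thesis
      using below by blast
  next
    case False
    have "U \<subseteq> range f"
      using U(1) unfolding omega_topology_def openin_upper_topology by (rule conjunct1)
    then obtain k where "f k \<in> U"
      using U(2) by blast
    obtain n where "n \<in> N" "k \<le> n"
      using False unfolding infinite_nat_iff_unbounded_le by blast
    have "f j \<in> U" if "n \<le> j" for j
    proof -
      have "chain_le f (f k) (f j)"
        using \<open>k \<le> n\<close> that assms by simp
      then show ?thesis
        using U(1) \<open>f k \<in> U\<close> unfolding omega_topology_def openin_upper_topology by blast
    qed
    then have "spec_up (omega_topology f) (f n) \<subseteq> U"
      unfolding spec_up_omega_topology[OF assms] by blast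
    then show ?thesis
      using \<open>n \<in> N\<close> unfolding D_eq by blast
  qed
qed

definition omega_plus_point_topology :: "(nat \<Rightarrow> 'a) \<Rightarrow> 'a \<Rightarrow> 'a topology" where
  "omega_plus_point_topology f p = upper_topology (insert p (range f)) (\<lambda>x y. x = y \<or> chain_le f x y)"

lemma topspace_omega_plus_point_topology [simp]:
  "topspace (omega_plus_point_topology f p) = insert p (range f)"
  unfolding omega_plus_point_topology_def by simp

lemma
  assumes "inj f"
  shows t0_space_omega_plus_point_topology: "t0_space (omega_plus_point_topology f p)"
    and spec_le_omega_plus_point_topology:
      "m \<le> n \<Longrightarrow> spec_le (omega_plus_point_topology f p) (f m) (f n)"
proof -
  let ?le = "\<lambda>x y. x = y \<or> chain_le f x y"
  have "reflp_on (insert p (range f)) ?le" "transp_on (insert p (range f)) ?le"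
    "antisymp_on (insert p (range f)) ?le"
    using transp_chain_le[OF assms] antisymp_chain_le[OF assms]
    unfolding reflp_on_def transp_on_def antisymp_on_def by blast+
  then show "t0_space (omega_plus_point_topology f p)"
    and "m \<le> n \<Longrightarrow> spec_le (omega_plus_point_topology f p) (f m) (f n)"
    unfolding omega_plus_point_topology_def
    by (auto simp: t0_space_upper_topology spec_le_upper_topology assms)
qed

lemma continuous_map_omega_plus_point_level:
  assumes "inj f" "inj g"
  shows "continuous_map (omega_plus_point_topology f p) (omega_topology g) (g \<circ> inv f)"
  unfolding omega_plus_point_topology_def
proof (rule continuous_map_upper_topology)
  show "(g \<circ> inv f) ` insert p (range f) \<subseteq> topspace (omega_topology g)"
    by (auto simp: omega_topology_def)
  fix x y assume "x \<in> insert p (range f)" "x = y \<or> chain_le f x y"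
  then consider "x = y" | m n where "x = f m" "y = f n" "m \<le> n"
    unfolding chain_le_def by blast
  then show "spec_le (omega_topology g) ((g \<circ> inv f) x) ((g \<circ> inv f) y)"
  proof cases
    case 1
    then show ?thesis
      by (auto intro: spec_le_refl simp: omega_topology_def)
  qed (simp add: spec_le_omega_topology assms)
qed

lemma continuous_map_omega_plus_point_indicator:
  assumes "p \<notin> range f" "a \<in> topspace Y" "b \<in> topspace Y"
  shows "continuous_map (omega_plus_point_topology f p) Y (\<lambda>x. if x = p then a else b)"
  unfolding omega_plus_point_topology_def
proof (rule continuous_map_upper_topology)
  fix x y assume "x \<in> insert p (range f)" "y \<in> insert p (range f)" "x = y \<or> chain_le f x y"
  then have "(if x = p then a else b) = (if y = p then a else b)"
    using assms(1) unfolding chain_le_def by auto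
  moreover have "spec_le Y (if y = p then a else b) (if y = p then a else b)"
    using assms(2,3) by (simp add: spec_le_refl)
  ultimately show "spec_le Y (if x = p then a else b) (if y = p then a else b)"
    by simp
qed (use assms in auto)

lemma dstar_reflection_extend:
  fixes Y :: "'c topology"
  assumes "dstar_reflection TYPE('c) X R \<eta>" "dstar_space Y" "continuous_map X Y f"
  obtains g where "continuous_map R Y g" "\<And>x. x \<in> topspace X \<Longrightarrow> g (\<eta> x) = f x"
  using assms unfolding dstar_reflection_def by metis

lemma omega_plus_point_no_dstar_reflection:
  fixes f :: "nat \<Rightarrow> 'a" and R :: "'b topology"
  assumes "inj f" "p \<notin> range f" "infinite (UNIV :: 'c set)"
  shows "\<not> dstar_reflection TYPE('c) (omega_plus_point_topology f p) R \<eta>"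
proof
  let ?X = "omega_plus_point_topology f p"
  assume reflection: "dstar_reflection TYPE('c) ?X R \<eta>"
  then have "dstar_space R" and \<eta>: "continuous_map ?X R \<eta>"
    unfolding dstar_reflection_def by blast+
  obtain g :: "nat \<Rightarrow> 'c" where "inj g"
    using assms(3) unfolding infinite_iff_countable_subset by blast
  obtain level where level: "continuous_map R (omega_topology g) level"
    and level_\<eta>: "\<And>x. x \<in> topspace ?X \<Longrightarrow> level (\<eta> x) = (g \<circ> inv f) x"
    using dstar_reflection_extend[OF reflection dstar_space_omega_topology[OF \<open>inj g\<close>]
        continuous_map_omega_plus_point_level[OF assms(1) \<open>inj g\<close>]] by blast
  have "continuous_map ?X (discrete_topology UNIV) (\<lambda>x. if x = p then g 0 else g 1)"
    by (rule continuous_map_omega_plus_point_indicator[OF assms(2)]) simp_all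
  then obtain ind where ind: "continuous_map R (discrete_topology UNIV) ind"
    and ind_\<eta>: "\<And>x. x \<in> topspace ?X \<Longrightarrow> ind (\<eta> x) = (if x = p then g 0 else g 1)"
    using dstar_reflection_extend[OF reflection dstar_space_discrete_topology] by blast
  let ?c = "\<lambda>n. \<eta> (f n)"
  let ?U = "{r \<in> topspace R. ind r \<in> {g 0}}"
  have chain_in: "?c n \<in> topspace R" for n
    using continuous_map_image_subset_topspace[OF \<eta>] by auto
  have chain_mono: "spec_le R (?c m) (?c n)" if "m \<le> n" for m n
    using spec_le_continuous_map[OF \<eta> spec_le_omega_plus_point_topology[OF assms(1) that]] .
  have chain_unbounded: "\<not> (\<forall>n. spec_le R (?c n) r)" for r
  proof
    have "level (?c n) = g n" for n
      using level_\<eta>[of "f n"] by (simp add: inv_f_f[OF assms(1)])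
    moreover assume "\<forall>n. spec_le R (?c n) r"
    ultimately have "\<forall>n. spec_le (omega_topology g) (g n) (level r)"
      using spec_le_continuous_map[OF level] by metis
    then show False
      using omega_topology_unbounded[OF \<open>inj g\<close>] by blast
  qed
  have "openin R ?U"
    by (rule openin_continuous_map_preimage[OF ind]) simp
  moreover have "\<eta> p \<in> ?U"
    using chain_in continuous_map_image_subset_topspace[OF \<eta>] ind_\<eta>[of p] by auto
  ultimately obtain n where "?c n \<in> ?U"
    using dstar_space_unbounded_chain_meets_open[OF \<open>dstar_space R\<close> chain_in chain_mono chain_unbounded]
    by blast
  moreover have "ind (?c n) = g 1"
    using ind_\<eta>[of "f n"] assms(2) by auto
  ultimately show False
    using \<open>inj g\<close> by (auto dest: injD)
qed

theorem mainTheorem4: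
  shows "\<exists>X :: nat set set topology. t0_space X \<and>
     (\<forall>(R :: 'b topology) \<eta>. \<not> dstar_reflection TYPE(('b + nat set set) set) X R \<eta>)"
proof (intro exI conjI allI)
  let ?f = "\<lambda>n. {{n}} :: nat set set"
  have inj: "inj ?f" and point: "{} \<notin> range ?f"
    by (auto intro: injI)
  have infinite: "infinite (UNIV :: ('b + nat set set) set set)"
    by (simp add: Finite_Set.finite_set)
  show "t0_space (omega_plus_point_topology ?f {})"
    using inj by (rule t0_space_omega_plus_point_topology)
  show "\<not> dstar_reflection TYPE(('b + nat set set) set) (omega_plus_point_topology ?f {}) R \<eta>"
    for R :: "'b topology" and \<eta>
    using omega_plus_point_no_dstar_reflection[OF inj point infinite] .
qed

end
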